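(* The inquisitive disjunction $\vee$ is strongly undefinable in propositional dependence logic $\mathcal D$. Concretely: for every context $\varphi(a,b)$ of $\mathcal D$ and every pair of distinct propositional letters $p,q$ not occurring in $\varphi(a,b)$, letting $M_{pq}$ be the model with worlds $w_1,w_2,w_3$ in which $p$ is true exactly at $w_1,w_2$, $q$ is true exactly at $w_2,w_3$, and all other letters are false everywhere, we have $\varphi(=\!(p),=\!(q))\not\equiv_{M_{pq}}=\!(p)\vee=\!(q)$; in particular $\varphi(=\!(p),=\!(q))\not\equiv=\!(p)\vee=\!(q)$.
   Context: Formulas of $\mathcal D$: $\varphi::= p\mid\neg p\mid\bot\mid=\!(p_1,\dots,p_n;q)\mid\varphi\land\varphi\mid\varphi\otimes\varphi$ with $p,q,p_i$ propositional letters ($n\ge0$; for $n=0$ written $=\!(q)$). A context $\varphi(a,b)$ is a $\mathcal D$ formula in which the letters $a,b$ do not occur negated nor inside a dependence atom; $\varphi(\psi,\chi)$ replaces $a$ by $\psi$ and $b$ by $\chi$. A model is $M=(W,V)$, $V(w)$ the set of letters true at $w$. Support at $s\subseteq W$: $s\models p$ iff $p$ true at all $w\in s$; $s\models\neg p$ iff $p$ false at all $w\in s$; $s\models\bot$ iff $s=\emptyset$; $s\models\psi\land\chi$ iff both; $s\models\psi\otimes\chi$ iff $s=t_1\cup t_2$ with $t_1\models\psi$, $t_2\models\chi$; $s\models=\!(p_1,\dots,p_n;q)$ iff any two worlds of $s$ agreeing on all $p_i$ agree on $q$; $s\models\psi\vee\chi$ iff $s\models\psi$ or $s\models\chi$ (inquisitive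 disjunction, not in $\mathcal D$). $\psi\equiv_M\chi$: same supporting states in $M$; $\psi\equiv\chi$: $\psi\equiv_M\chi$ for all $M$. Strong undefinability of a binary connective $\circ$ means: there are formulas $\psi,\chi$ and a model $M$ such that for every template (here: context) $\varphi(a,b)$, $\varphi(\psi',\chi')\not\equiv_{M'}\psi'\circ\chi'$, where $\psi',\chi'$ differ from $\psi,\chi$ only by a renaming of atoms and $M'$ is isomorphic to $M$. *)

theory Defs
  imports Main
begin

text \<open>Formulas of propositional dependence logic D over letters of type 'a.
  Dep ps q is the dependence atom =(p1,...,pn;q); Dep [] q is =(q).\<close>
datatype 'a dform =
    Atom 'a
  | NegAtom 'a
  | Bot
  | Dep "'a list" 'a
  | Conj "'a dform" "'a dform"
  | Tensor "'a dform" "'a dform"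

fun supp :: "('w \<Rightarrow> 'a set) \<Rightarrow> 'w set \<Rightarrow> 'a dform \<Rightarrow> bool" where
  "supp V s (Atom p) = (\<forall>w\<in>s. p \<in> V w)"
| "supp V s (NegAtom p) = (\<forall>w\<in>s. p \<notin> V w)"
| "supp V s Bot = (s = {})"
| "supp V s (Dep ps q) =
     (\<forall>w\<in>s. \<forall>v\<in>s. (\<forall>r\<in>set ps. (r \<in> V w \<longleftrightarrow> r \<in> V v)) \<longrightarrow> (q \<in> V w \<longleftrightarrow> q \<in> V v))"
| "supp V s (Conj f g) = (supp V s f \<and> supp V s g)"
| "supp V s (Tensor f g) = (\<exists>t1 t2. s = t1 \<union> t2 \<and> supp V t1 f \<and> supp V t2 g)"

text \<open>Support of the inquisitive disjunction of two D formulas (not itself a D formula).\<close>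
definition supp_idisj :: "('w \<Rightarrow> 'a set) \<Rightarrow> 'w set \<Rightarrow> 'a dform \<Rightarrow> 'a dform \<Rightarrow> bool" where
  "supp_idisj V s f g = (supp V s f \<or> supp V s g)"

fun letters :: "'a dform \<Rightarrow> 'a set" where
  "letters (Atom p) = {p}"
| "letters (NegAtom p) = {p}"
| "letters Bot = {}"
| "letters (Dep ps q) = insert q (set ps)"
| "letters (Conj f g) = letters f \<union> letters g"
| "letters (Tensor f g) = letters f \<union> letters g"

fun bad_letters :: "'a dform \<Rightarrow> 'a set" where
  "bad_letters (Atom p) = {}"
| "bad_letters (NegAtom p) = {p}"
| "bad_letters Bot = {}"
| "bad_letters (Dep ps q) = insert q (set ps)"
| "bad_letters (Conj f g) = bad_letters f \<union> bad_letters g"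
| "bad_letters (Tensor f g) = bad_letters f \<union> bad_letters g"

definition is_context :: "'a \<Rightarrow> 'a \<Rightarrow> 'a dform \<Rightarrow> bool" where
  "is_context a b phi = (a \<noteq> b \<and> a \<notin> bad_letters phi \<and> b \<notin> bad_letters phi)"

fun subst2 :: "'a \<Rightarrow> 'a dform \<Rightarrow> 'a \<Rightarrow> 'a dform \<Rightarrow> 'a dform \<Rightarrow> 'a dform" where
  "subst2 a psi b chi (Atom p) = (if p = a then psi else if p = b then chi else Atom p)"
| "subst2 a psi b chi (NegAtom p) = NegAtom p"
| "subst2 a psi b chi Bot = Bot"
| "subst2 a psi b chi (Dep ps q) = Dep ps q"
| "subst2 a psi b chi (Conj f g) = Conj (subst2 a psi b chi f) (subst2 a psi b chi g)"
| "subst2 a psi b chi (Tensor f g) = Tensor (subst2 a psi b chi f) (subst2 a psi b chi g)"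

definition Wpq :: "nat set" where "Wpq = {1, 2, 3}"

definition Vpq :: "'a \<Rightarrow> 'a \<Rightarrow> nat \<Rightarrow> 'a set" where
  "Vpq p q w = (if w = 1 then {p} else if w = 2 then {p, q} else if w = 3 then {q} else {})"

end

theory Submission
  imports Defs
begin

text \<open>In M_pq the disjunction =(p) \<or> =(q) is supported by {w1,w2} and {w2,w3} but not by
  {w1,w3}.  No formula phi(=(p),=(q)) can have this pattern: every such formula is either
  contradictory (supported by the empty state only) or supported by {w1} and {w3} and, whenever
  it is supported by {w1,w2} and {w2,w3}, also by {w1,w3}.  The leaves =(p), =(q) satisfy this;
  every other leaf is supported by all states or by the empty state only, since its letters are
  false everywhere; conjunction preserves the property, and a tensor of two non-contradictory
  formulas supports {w1,w3} = {w1} \<union> {w3}.\<close>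

lemma supp_empty: "supp V {} f"
  by (induction f) auto

definition contradictory :: "('w \<Rightarrow> 'a set) \<Rightarrow> 'a dform \<Rightarrow> bool" where
  "contradictory V f \<longleftrightarrow> (\<forall>s. supp V s f \<longrightarrow> s = {})"

definition gap_closed :: "('w \<Rightarrow> 'a set) \<Rightarrow> 'w \<Rightarrow> 'w \<Rightarrow> 'w \<Rightarrow> 'a dform \<Rightarrow> bool" where
  "gap_closed V u v w f \<longleftrightarrow> contradictory V f \<or>
     (supp V {u} f \<and> supp V {w} f \<and> (supp V {u, v} f \<longrightarrow> supp V {v, w} f \<longrightarrow> supp V {u, w} f))"

lemma gap_closed_if_contradictory: "contradictory V f \<Longrightarrow> gap_closed V u v w f"
  by (simp add: gap_closed_def)

lemma gap_closed_if_valid: "(\<And>s. supp V s f) \<Longrightarrow> gap_closed V u v w f"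
  by (simp add: gap_closed_def)

lemma supp_TensorI: "supp V t1 f \<Longrightarrow> supp V t2 g \<Longrightarrow> supp V (t1 \<union> t2) (Tensor f g)"
  by (simp only: supp.simps) blast

lemma supp_Tensor_contradictory_left:
  assumes "contradictory V f"
  shows "supp V s (Tensor f g) \<longleftrightarrow> supp V s g"
proof
  assume "supp V s (Tensor f g)"
  then obtain t1 t2 where "s = t1 \<union> t2" "supp V t1 f" "supp V t2 g"
    by auto
  with assms show "supp V s g"
    by (metis contradictory_def sup_bot_left)
next
  assume "supp V s g"
  then show "supp V s (Tensor f g)"
    using supp_TensorI[OF supp_empty] by fastforce
qed

lemma supp_Tensor_contradictory_right:
  assumes "contradictory V g"
  shows "supp V s (Tensor f g) \<longleftrightarrow> supp V s f"
proof
  assume "supp V s (Tensor f g)"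
  then obtain t1 t2 where "s = t1 \<union> t2" "supp V t1 f" "supp V t2 g"
    by auto
  with assms show "supp V s f"
    by (metis contradictory_def sup_bot_right)
next
  assume "supp V s f"
  then show "supp V s (Tensor f g)"
    using supp_TensorI[OF _ supp_empty] by fastforce
qed

lemma gap_closed_Conj:
  "gap_closed V u v w f \<Longrightarrow> gap_closed V u v w g \<Longrightarrow> gap_closed V u v w (Conj f g)"
  unfolding gap_closed_def contradictory_def by auto

lemma gap_closed_Tensor:
  assumes f: "gap_closed V u v w f" and g: "gap_closed V u v w g"
  shows "gap_closed V u v w (Tensor f g)"
proof (cases "contradictory V f \<or> contradictory V g")
  case True
  then show ?thesis
  proof
    assume "contradictory V f"
    then show ?thesis
      using g by (simp only: gap_closed_def contradictory_def supp_Tensor_contradictory_left)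
  next
    assume "contradictory V g"
    then show ?thesis
      using f by (simp only: gap_closed_def contradictory_def supp_Tensor_contradictory_right)
  qed
next
  case False
  then have "supp V {u} f" "supp V {w} f" "supp V {w} g"
    using f g unfolding gap_closed_def by auto
  then have "supp V ({u} \<union> {}) (Tensor f g)" "supp V ({w} \<union> {}) (Tensor f g)"
    and "supp V ({u} \<union> {w}) (Tensor f g)"
    by (auto intro: supp_TensorI supp_empty)
  then show ?thesis
    by (simp add: gap_closed_def insert_commute)
qed

lemma subst2_preserves:
  assumes P_Conj: "\<And>f g. P f \<Longrightarrow> P g \<Longrightarrow> P (Conj f g)"
    and P_Tensor: "\<And>f g. P f \<Longrightarrow> P g \<Longrightarrow> P (Tensor f g)"
    and "P psi" "P chi" "P Bot"
    and "\<And>r. r \<in> letters phi \<Longrightarrow> r \<noteq> a \<Longrightarrow> r \<noteq> b \<Longrightarrow> P (Atom r)"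
    and "\<And>r. r \<in> letters phi \<Longrightarrow> P (NegAtom r)"
    and "\<And>ps r. insert r (set ps) \<subseteq> letters phi \<Longrightarrow> P (Dep ps r)"
  shows "P (subst2 a psi b chi phi)"
  using assms(3-)
proof (induction phi)
  case (Conj f g)
  have "P (subst2 a psi b chi f)" "P (subst2 a psi b chi g)"
    by (intro Conj.IH; use Conj.prems in force)+
  then show ?case by (simp add: P_Conj)
next
  case (Tensor f g)
  have "P (subst2 a psi b chi f)" "P (subst2 a psi b chi g)"
    by (intro Tensor.IH; use Tensor.prems in force)+
  then show ?case by (simp add: P_Tensor)
qed auto

lemma contradictory_Atom_false: "(\<And>w. r \<notin> V w) \<Longrightarrow> contradictory V (Atom r)"
  by (auto simp: contradictory_def)

lemma supp_NegAtom_false: "(\<And>w. r \<notin> V w) \<Longrightarrow> supp V s (NegAtom r)"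
  by simp

lemma supp_Dep_false: "(\<And>w. r \<notin> V w) \<Longrightarrow> supp V s (Dep ps r)"
  by simp

lemma Vpq_other_letter: "r \<noteq> p \<Longrightarrow> r \<noteq> q \<Longrightarrow> r \<notin> Vpq p q w"
  by (simp add: Vpq_def)

lemma gap_closed_Vpq_Dep:
  assumes "p \<noteq> q"
  shows "gap_closed (Vpq p q) 1 2 3 (Dep [] p)" and "gap_closed (Vpq p q) 1 2 3 (Dep [] q)"
  using assms by (simp_all add: gap_closed_def Vpq_def)

lemma gap_closed_Vpq_subst2:
  assumes "p \<noteq> q" "p \<notin> letters phi" "q \<notin> letters phi"
  shows "gap_closed (Vpq p q) 1 2 3 (subst2 a (Dep [] p) b (Dep [] q) phi)"
proof (rule subst2_preserves)
  have false: "r \<notin> Vpq p q w" if "r \<in> letters phi" for r w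
    using that assms(2,3) Vpq_other_letter by metis
  show "gap_closed (Vpq p q) 1 2 3 (Atom r)" if "r \<in> letters phi" for r
    using that false by (blast intro: gap_closed_if_contradictory contradictory_Atom_false)
  show "gap_closed (Vpq p q) 1 2 3 (NegAtom r)" if "r \<in> letters phi" for r
    using that false by (blast intro: gap_closed_if_valid supp_NegAtom_false)
  show "gap_closed (Vpq p q) 1 2 3 (Dep ps r)" if "insert r (set ps) \<subseteq> letters phi" for ps r
    using that false by (blast intro: gap_closed_if_valid supp_Dep_false)
  show "gap_closed (Vpq p q) 1 2 3 Bot"
    by (simp add: gap_closed_if_contradictory contradictory_def)
qed (use assms(1) gap_closed_Vpq_Dep gap_closed_Conj gap_closed_Tensor in auto)

lemma Vpq_idisj_gap:
  assumes "p \<noteq> q"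
  shows "supp_idisj (Vpq p q) {1, 2} (Dep [] p) (Dep [] q)"
    and "supp_idisj (Vpq p q) {2, 3} (Dep [] p) (Dep [] q)"
    and "\<not> supp_idisj (Vpq p q) {1, 3} (Dep [] p) (Dep [] q)"
  using assms by (simp_all add: supp_idisj_def Vpq_def) blast

lemma idisj_not_gap_closed:
  assumes "p \<noteq> q"
    and "\<forall>s \<subseteq> Wpq. supp (Vpq p q) s f \<longleftrightarrow> supp_idisj (Vpq p q) s (Dep [] p) (Dep [] q)"
  shows "\<not> gap_closed (Vpq p q) 1 2 3 f"
proof -
  have "{1, 2} \<subseteq> Wpq" "{2, 3} \<subseteq> Wpq" "{1, 3} \<subseteq> Wpq"
    by (auto simp: Wpq_def)
  then have "supp (Vpq p q) {1, 2} f" "supp (Vpq p q) {2, 3} f" "\<not> supp (Vpq p q) {1, 3} f"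
    using assms(2) Vpq_idisj_gap[OF assms(1)] by blast+
  then show ?thesis
    unfolding gap_closed_def contradictory_def by (metis insert_not_empty)
qed

theorem theorem6:
  fixes phi :: "'a dform" and a b p q :: 'a
  assumes "is_context a b phi"
    and "p \<noteq> q"
    and "p \<notin> letters phi" and "q \<notin> letters phi"
  shows "\<not> (\<forall>s \<subseteq> Wpq. supp (Vpq p q) s (subst2 a (Dep [] p) b (Dep [] q) phi)
                          \<longleftrightarrow> supp_idisj (Vpq p q) s (Dep [] p) (Dep [] q))
         \<and> \<not> (\<forall>(W :: nat set) V. \<forall>s \<subseteq> W. supp V s (subst2 a (Dep [] p) b (Dep [] q) phi)
                          \<longleftrightarrow> supp_idisj V s (Dep [] p) (Dep [] q))"
proof -
  let ?f = "subst2 a (Dep [] p) b (Dep [] q) phi"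
  have in_Mpq: "\<not> (\<forall>s \<subseteq> Wpq. supp (Vpq p q) s ?f
                          \<longleftrightarrow> supp_idisj (Vpq p q) s (Dep [] p) (Dep [] q))"
    using idisj_not_gap_closed[OF assms(2)] gap_closed_Vpq_subst2[OF assms(2-4)] by blast
  moreover have "\<not> (\<forall>(W :: nat set) V. \<forall>s \<subseteq> W. supp V s ?f
                          \<longleftrightarrow> supp_idisj V s (Dep [] p) (Dep [] q))"
    using in_Mpq by (auto elim!: allE[of _ Wpq] allE[of _ "Vpq p q"])
  ultimately show ?thesis ..
qed

end
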